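(* Let $2 \leq d \leq n$ and let $C > 0$. Suppose that for every choice of families $\mathcal{T}_1, \dots, \mathcal{T}_d$ of $1$-tubes in $\mathbb{R}^n$ and every finitely supported nonnegative function $M : \mathcal{Q} \to \mathbb{R}$ with $\sum_{Q \in \mathcal{Q}} M(Q)^n = 1$, there exist nonnegative functions $S_j : \mathcal{Q} \times \mathcal{T}_j \to \mathbb{R}$ ($1 \le j \le d$) such that (i) for all $Q \in \mathcal{Q}$ and all $T_1 \in \mathcal{T}_1, \dots, T_d \in \mathcal{T}_d$ with $T_j \cap Q \neq \emptyset$ for every $j$, $$e(T_1) \wedge \cdots \wedge e(T_d)\, M(Q)^n \leq C\, S_1(Q,T_1)\cdots S_d(Q,T_d);$$ (ii) for all $j$ and all $T_j \in \mathcal{T}_j$, $$\sum_{Q \in \mathcal{Q} :\, T_j \cap Q \neq \emptyset} S_j(Q,T_j) \leq C.$$ Then there is a constant $C_{d,n}$ (depending only on $C$, $d$, $n$) such that for all families $\mathcal{T}_1,\dots,\mathcal{T}_d$ of $1$-tubes in $\mathbb{R}^n$ and all nonnegative coefficients $a_{T_j}$, $$\int_{\mathbb{R}^n} \left(\sum_{T_1 \in \mathcal{T}_1} \cdots \sum_{T_d \in \mathcal{T}_d} a_{T_1}\chi_{T_1}(x) \cdots a_{T_d}\chi_{T_d}(x)\; e(T_1)\wedge \cdots \wedge e(T_d)\right)^{1/(d-1)} dx \leq C_{d,n}\left(\sum_{T_1 \in \mathcal{T}_1} a_{T_1} \cdots \sum_{T_d \in \mathcal{T}_d} a_{T_d}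\right)^{1/(d-1)}.$$
   Context: $\mathcal{Q}$ denotes the lattice of unit cubes $\prod_{i=1}^n [m_i, m_i+1)$, $m_i \in \mathbb{Z}$, in $\mathbb{R}^n$. A $1$-tube $T$ is the $1$-neighbourhood of a doubly-infinite line in $\mathbb{R}^n$, with direction $e(T) \in \mathbb{S}^{n-1}$ parallel to the line; $\chi_T$ is its indicator function. For $v_1,\dots,v_d \in \mathbb{R}^n$, $v_1 \wedge \cdots \wedge v_d$ is the unsigned $d$-dimensional volume of the parallelepiped they span. *)

theory Defs
  imports "HOL-Analysis.Analysis"
begin

text \<open>A 1-tube is represented by a pair (p, v): a base point p and a unit direction v.
  Its point set is the (open) 1-neighbourhood of the line p + t v; its direction is v.\<close>
type_synonym 'n tube = "(real^'n) \<times> (real^'n)"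

definition is_tube :: "('n::finite) tube \<Rightarrow> bool" where
  "is_tube T \<longleftrightarrow> norm (snd T) = 1"

definition tube_set :: "('n::finite) tube \<Rightarrow> (real^'n) set" where
  "tube_set T = {x. \<exists>t::real. dist x (fst T + t *\<^sub>R snd T) < 1}"

definition tube_dir :: "('n::finite) tube \<Rightarrow> real^'n" where
  "tube_dir T = snd T"

definition cube :: "int^('n::finite) \<Rightarrow> (real^'n) set" where
  "cube m = {x. \<forall>i. of_int (m $ i) \<le> x $ i \<and> x $ i < of_int (m $ i) + 1}"

text \<open>Unsigned d-dimensional volume of the parallelepiped spanned by v 0, ..., v (d-1):
  square root of the Gram determinant (determinant written out via Leibniz).\<close>
definition gram_det :: "(nat \<Rightarrow> 'a::real_inner) \<Rightarrow> nat \<Rightarrow> real" where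
  "gram_det v d = (\<Sum>p | p permutes {..<d}. of_int (sign p) * (\<Prod>i<d. v i \<bullet> v (p i)))"

definition wedge :: "(nat \<Rightarrow> 'a::real_inner) \<Rightarrow> nat \<Rightarrow> real" where
  "wedge v d = sqrt (gram_det v d)"

end

theory Submission
  imports Defs "Jordan_Normal_Form.Determinant"
begin

text \<open>Let G(Q) be the sum of a(T_1) ... a(T_d) e(T_1) /\ ... /\ e(T_d) over the d-tuples of tubes
  that all meet the cube Q. The integrand is at most G(Q) on Q, so with p = 1/(d-1) it suffices
  to bound s = sum_Q G(Q)^p. Choosing M(Q)^n = G(Q)^p / s in the hypothesis, (i) gives
  G(Q)^(dp) = s M(Q)^n G(Q) <= C s prod_j g_j(Q), where g_j(Q) is the sum of a(T) S_j(Q,T) over the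
  tubes T of the j-th family meeting Q, and (ii) gives sum_Q g_j(Q) <= C sum_T a(T).
  Hoelder's inequality with d equal exponents then yields s <= (C s)^(1/d) prod_j (C sum_T a(T))^(1/d),
  that is s^(d-1) <= C^(d+1) prod_j sum_T a(T).\<close>

lemma inner_gram_schmidt_step_eq_0:
  fixes v :: "'a::real_inner" and w :: "nat \<Rightarrow> 'a"
  assumes orth: "\<forall>i<m. \<forall>j<m. i \<noteq> j \<longrightarrow> inner (w i) (w j) = 0" and j: "j < m"
  shows "inner (v - (\<Sum>k<m. (inner v (w k) / inner (w k) (w k)) *\<^sub>R w k)) (w j) = 0"
proof -
  have "(\<Sum>k<m. (inner v (w k) / inner (w k) (w k)) * inner (w k) (w j))
      = (\<Sum>k<m. if k = j then (inner v (w j) / inner (w j) (w j)) * inner (w j) (w j) else 0)"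
    using orth j by (intro sum.cong) auto
  also have "\<dots> = (inner v (w j) / inner (w j) (w j)) * inner (w j) (w j)"
    using j by simp
  also have "\<dots> = inner v (w j)"
    by (cases "w j = 0") auto
  finally show ?thesis
    by (simp add: inner_diff_left inner_sum_left)
qed

text \<open>Gram-Schmidt without normalisation: the vectors w k may vanish when the v i are dependent.\<close>

lemma exists_orthogonal_expansion:
  fixes v :: "nat \<Rightarrow> 'a::real_inner"
  shows "\<exists>w U. (\<forall>i<m. \<forall>j<m. i \<noteq> j \<longrightarrow> inner (w i) (w j) = 0) \<and>
     (\<forall>i<m. v i = (\<Sum>k<m. U k i *\<^sub>R w k))"
proof (induction m)
  case 0
  then show ?case by simp
next
  case (Suc m)
  then obtain w U where orth: "\<forall>i<m. \<forall>j<m. i \<noteq> j \<longrightarrow> inner (w i) (w j) = 0"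
    and rep: "\<forall>i<m. v i = (\<Sum>k<m. U k i *\<^sub>R w k)" by blast
  define c where "c k = inner (v m) (w k) / inner (w k) (w k)" for k
  define w' where "w' = w(m := v m - (\<Sum>k<m. c k *\<^sub>R w k))"
  define U' where "U' k i = (if i < m then (if k < m then U k i else 0)
      else (if k = m then 1 else c k))" for k i
  have new_orth: "inner (w' m) (w' j) = 0" if "j < m" for j
    using inner_gram_schmidt_step_eq_0[OF orth that, of "v m"] that
    by (simp add: w'_def c_def)
  have "\<forall>i<Suc m. \<forall>j<Suc m. i \<noteq> j \<longrightarrow> inner (w' i) (w' j) = 0"
    using orth new_orth by (auto simp: less_Suc_eq inner_commute) (simp_all add: w'_def)
  moreover have "v i = (\<Sum>k<Suc m. U' k i *\<^sub>R w' k)" if "i < Suc m" for i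
  proof (cases "i = m")
    case True
    then show ?thesis by (simp add: U'_def w'_def)
  next
    case False
    with that rep show ?thesis by (simp add: U'_def w'_def)
  qed
  ultimately show ?case by blast
qed

lemma inner_orthogonal_expansion:
  fixes v :: "nat \<Rightarrow> 'a::real_inner"
  assumes orth: "\<forall>i<m. \<forall>j<m. i \<noteq> j \<longrightarrow> inner (w i) (w j) = 0"
    and rep: "\<forall>i<m. v i = (\<Sum>k<m. U k i *\<^sub>R w k)"
    and i: "i < m" and j: "j < m"
  shows "inner (v i) (v j) = (\<Sum>k<m. (U k i * norm (w k)) * (U k j * norm (w k)))"
proof -
  have "inner (v i) (v j) = (\<Sum>k<m. \<Sum>l<m. U k i * U l j * inner (w k) (w l))"
    using rep i j by (simp add: inner_sum_left inner_sum_right sum_distrib_left mult.assoc)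
      (subst sum.swap, simp add: inner_commute mult_ac)
  also have "\<dots> = (\<Sum>k<m. U k i * U k j * inner (w k) (w k))"
  proof (rule sum.cong[OF refl])
    fix k assume k: "k \<in> {..<m}"
    have "(\<Sum>l<m. U k i * U l j * inner (w k) (w l)) = (\<Sum>l<m. if l = k then U k i * U k j * inner (w k) (w k) else 0)"
      using k orth by (intro sum.cong) auto
    thus "(\<Sum>l<m. U k i * U l j * inner (w k) (w l)) = U k i * U k j * inner (w k) (w k)"
      using k by simp
  qed
  also have "\<dots> = (\<Sum>k<m. (U k i * norm (w k)) * (U k j * norm (w k)))"
    by (simp add: power2_norm_eq_inner[symmetric] power2_eq_square mult_ac)
  finally show ?thesis .
qed

lemma gram_det_nonneg:
  fixes v :: "nat \<Rightarrow> 'a::real_inner"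
  shows "gram_det v d \<ge> 0"
proof -
  obtain w U where orth: "\<forall>i<d. \<forall>j<d. i \<noteq> j \<longrightarrow> inner (w i) (w j) = 0"
    and rep: "\<forall>i<d. v i = (\<Sum>k<d. U k i *\<^sub>R w k)" using exists_orthogonal_expansion by blast
  define B :: "real mat" where "B = mat d d (\<lambda>(k,i). U k i * norm (w k))"
  define G :: "real mat" where "G = mat d d (\<lambda>(i,j). inner (v i) (v j))"
  have B: "B \<in> carrier_mat d d" by (simp add: B_def)
  have "gram_det v d = Determinant.det G"
    unfolding gram_det_def
    by (subst det_def'[of _ d])
      (auto simp: G_def lessThan_atLeast0 intro!: sum.cong prod.cong dest: permutes_in_image)
  also have "G = transpose_mat B * B"
  proof (rule eq_matI)
    fix i j assume "i < dim_row (transpose_mat B * B)" "j < dim_col (transpose_mat B * B)"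
    hence ij: "i < d" "j < d" by (auto simp: B_def)
    have "(transpose_mat B * B) $$ (i, j) = (\<Sum>k<d. (U k i * norm (w k)) * (U k j * norm (w k)))"
      using ij by (simp add: B_def scalar_prod_def lessThan_atLeast0)
    also have "\<dots> = inner (v i) (v j)" using inner_orthogonal_expansion[OF orth rep ij] by simp
    finally show "G $$ (i, j) = (transpose_mat B * B) $$ (i, j)" using ij by (simp add: G_def)
  qed (auto simp: G_def B_def)
  also have "Determinant.det (transpose_mat B * B) = Determinant.det B * Determinant.det B"
    using B by (simp add: det_mult[of _ d] det_transpose)
  finally show ?thesis by simp
qed

lemma wedge_nonneg: "wedge v d \<ge> 0"
  by (simp add: wedge_def gram_det_nonneg)

lemma powr_inverse_power: "0 \<le> (x::real) \<Longrightarrow> 0 < n \<Longrightarrow> (x powr (1 / real n)) ^ n = x"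
  by (cases "x = 0") (simp_all add: powr_realpow[symmetric] powr_powr)

lemma geometric_mean_le_scaled_arithmetic_mean:
  fixes x B :: "nat \<Rightarrow> real"
  assumes "0 < d" and x: "\<forall>j<d. 0 \<le> x j" and B: "\<forall>j<d. 0 < B j"
  shows "(\<Prod>j<d. x j powr (1 / d)) \<le> (\<Prod>j<d. B j powr (1 / d)) * (\<Sum>j<d. x j / B j / d)"
proof -
  have "(\<Prod>j<d. x j powr (1 / d)) = (\<Prod>j<d. B j powr (1 / d) * (x j / B j) powr (1 / d))"
    using x B by (intro prod.cong refl) (auto simp: powr_divide)
  also have "\<dots> = (\<Prod>j<d. B j powr (1 / d)) * (\<Prod>j<d. x j / B j) powr (1 / d)"
    by (simp add: prod.distrib prod_powr_distrib)
  also have "(\<Prod>j<d. x j / B j) powr (1 / d) \<le> (\<Sum>j<d. x j / B j / d)"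
    using arith_geom_mean[of "{..<d}" "\<lambda>j. x j / B j"] \<open>0 < d\<close> x B
    by (simp add: lessThan_empty_iff less_imp_le)
  finally show ?thesis
    by (simp add: mult_left_mono prod_nonneg)
qed

lemma holder_sum_prod_powr:
  fixes g :: "nat \<Rightarrow> 'q \<Rightarrow> real" and B :: "nat \<Rightarrow> real"
  assumes "finite F" and "0 < d" and g: "\<forall>j<d. \<forall>Q\<in>F. 0 \<le> g j Q"
    and sum_g: "\<forall>j<d. (\<Sum>Q\<in>F. g j Q) \<le> B j"
  shows "(\<Sum>Q\<in>F. \<Prod>j<d. g j Q powr (1 / d)) \<le> (\<Prod>j<d. B j powr (1 / d))"
proof (cases "\<exists>j<d. B j = 0")
  case True
  then obtain j0 where "j0 < d" "B j0 = 0"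
    by blast
  with g sum_g \<open>finite F\<close> have "\<forall>Q\<in>F. g j0 Q = 0"
    by (metis order_antisym sum_nonneg sum_nonneg_eq_0_iff)
  with \<open>j0 < d\<close> have "(\<Sum>Q\<in>F. \<Prod>j<d. g j Q powr (1 / d)) = 0"
    by (intro sum.neutral ballI) (auto intro!: prod_zero bexI[of _ j0])
  then show ?thesis
    by (simp add: prod_nonneg)
next
  case False
  have B: "\<forall>j<d. 0 < B j"
    using g sum_g False by (metis order.not_eq_order_implies_strict order_trans sum_nonneg)
  have "(\<Sum>Q\<in>F. \<Prod>j<d. g j Q powr (1 / d))
      \<le> (\<Sum>Q\<in>F. (\<Prod>j<d. B j powr (1 / d)) * (\<Sum>j<d. g j Q / B j / d))"
    using geometric_mean_le_scaled_arithmetic_mean[OF \<open>0 < d\<close> _ B] g by (intro sum_mono) auto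
  also have "\<dots> = (\<Prod>j<d. B j powr (1 / d)) * (\<Sum>j<d. (\<Sum>Q\<in>F. g j Q) / B j / d)"
    by (simp add: sum_distrib_left[symmetric] sum_divide_distrib sum.swap[of _ _ F])
  also have "\<dots> \<le> (\<Prod>j<d. B j powr (1 / d)) * (\<Sum>j<d. 1 / d)"
    using sum_g B by (intro mult_left_mono divide_right_mono sum_mono) (auto simp: prod_nonneg)
  also have "\<dots> = (\<Prod>j<d. B j powr (1 / d))"
    using \<open>0 < d\<close> by simp
  finally show ?thesis .
qed

lemma le_powr_of_le_powr_self:
  fixes s c :: real
  assumes "0 < s" and "0 \<le> c" and "2 \<le> d" and le: "s \<le> (c * s) powr (1 / real d)"
  shows "s \<le> c powr (1 / (real d - 1))"
proof -
  have "s ^ d \<le> ((c * s) powr (1 / real d)) ^ d"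
    using le \<open>0 < s\<close> by (intro power_mono) auto
  also have "\<dots> = c * s"
    using assms by (intro powr_inverse_power) auto
  finally have "s ^ (d - 1) * s \<le> c * s"
    using \<open>2 \<le> d\<close> by (metis Suc_diff_1 less_le_trans pos2 power_Suc2)
  hence "s ^ (d - 1) \<le> c"
    using \<open>0 < s\<close> by simp
  have "s = (s ^ (d - 1)) powr (1 / (real d - 1))"
    using assms by (simp add: powr_realpow[symmetric] powr_powr of_nat_diff)
  also have "\<dots> \<le> c powr (1 / (real d - 1))"
    using \<open>s ^ (d - 1) \<le> c\<close> \<open>0 < s\<close> assms by (intro powr_mono2) auto
  finally show ?thesis .
qed

lemma powr_power_mult:
  fixes C P r :: real
  assumes "0 < C" and "0 \<le> P"
  shows "(C ^ k * P) powr r = C powr (real k * r) * P powr r"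
  using assms by (simp add: powr_mult powr_realpow[symmetric] powr_powr)

lemma exists_normalised_root:
  fixes w :: "'q \<Rightarrow> real"
  assumes "finite F" and "\<forall>Q\<in>F. 0 \<le> w Q" and "0 < (\<Sum>Q\<in>F. w Q)" and "0 < N"
  shows "\<exists>M. finite {Q. M Q \<noteq> 0} \<and> (\<forall>Q. 0 \<le> M Q) \<and> (\<Sum>Q\<in>{Q. M Q \<noteq> 0}. M Q ^ N) = 1
    \<and> (\<forall>Q\<in>F. M Q ^ N = w Q / (\<Sum>Q\<in>F. w Q))"
proof -
  define s where "s = (\<Sum>Q\<in>F. w Q)"
  define M where "M Q = (if Q \<in> F then (w Q / s) powr (1 / real N) else 0)" for Q
  have power_M: "M Q ^ N = w Q / s" if "Q \<in> F" for Q
    using that assms by (simp add: M_def s_def powr_inverse_power)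
  have support: "{Q. M Q \<noteq> 0} \<subseteq> F"
    by (auto simp: M_def split: if_splits)
  have "(\<Sum>Q\<in>{Q. M Q \<noteq> 0}. M Q ^ N) = (\<Sum>Q\<in>F. M Q ^ N)"
    using support assms by (intro sum.mono_neutral_left) auto
  also have "\<dots> = 1"
    using assms by (simp add: power_M s_def sum_divide_distrib[symmetric])
  finally have "(\<Sum>Q\<in>{Q. M Q \<noteq> 0}. M Q ^ N) = 1" .
  moreover have "finite {Q. M Q \<noteq> 0}"
    using support assms(1) by (rule finite_subset)
  moreover have "\<forall>Q. 0 \<le> M Q"
    by (simp add: M_def)
  ultimately show ?thesis
    using power_M unfolding s_def by blast
qed

definition cube_index :: "real^'n::finite \<Rightarrow> int^'n" where
  "cube_index x = (\<chi> i. \<lfloor>x $ i\<rfloor>)"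

lemma mem_cube_iff: "x \<in> cube Q \<longleftrightarrow> Q = cube_index x"
  unfolding cube_def cube_index_def Finite_Cartesian_Product.vec_eq_iff by (auto simp: floor_eq_iff) (metis floor_eq_iff)

lemma mem_cube_index: "x \<in> cube (cube_index x)"
  by (simp add: mem_cube_iff)

lemma sets_lborel_cube [measurable]: "cube Q \<in> sets lborel"
  unfolding cube_def by measurable

lemma emeasure_cube_le: "emeasure lborel (cube Q) \<le> 1"
proof -
  have "cube Q \<subseteq> cbox (\<chi> i. of_int (Q $ i)) (\<chi> i. of_int (Q $ i) + 1)"
    by (auto simp: cube_def mem_box_cart less_imp_le)
  hence "emeasure lborel (cube Q)
      \<le> emeasure lborel (cbox (\<chi> i. real_of_int (Q $ i)) (\<chi> i. real_of_int (Q $ i) + 1))"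
    by (intro emeasure_mono) auto
  also have "\<dots> = 1"
    by (subst emeasure_lborel_cbox_eq) (auto simp: Basis_vec_def inner_axis intro!: prod.neutral)
  finally show ?thesis .
qed

lemma exists_bij_nat_int_vec: "\<exists>q :: nat \<Rightarrow> int^'n::finite. bij q"
proof -
  have "inj (\<lambda>k::int. (\<chi> i::'n. k))"
    by (auto simp: inj_def Finite_Cartesian_Product.vec_eq_iff)
  hence "infinite (UNIV :: (int^'n) set)"
    by (metis finite_imageD finite_subset infinite_UNIV_int subset_UNIV)
  moreover have "countable (UNIV :: (int^'n) set)"
    by simp
  ultimately obtain e :: "int^'n \<Rightarrow> nat" where "bij e"
    using countableE_infinite by blast
  then show ?thesis
    using bij_betw_inv_into by blast
qed

lemma nn_integral_cube_index_le:
  fixes f :: "int^'n::finite \<Rightarrow> real"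
  assumes nonneg: "\<And>Q. 0 \<le> f Q" and bounded: "\<And>F. finite F \<Longrightarrow> (\<Sum>Q\<in>F. f Q) \<le> B"
  shows "(\<integral>\<^sup>+ x. ennreal (f (cube_index x)) \<partial>lborel) \<le> ennreal B"
proof -
  obtain q :: "nat \<Rightarrow> int^'n" where "inj q" "surj q"
    using exists_bij_nat_int_vec bij_is_inj bij_is_surj by blast
  have step_function: "ennreal (f (cube_index x)) = (\<Sum>k. ennreal (f (q k)) * indicator (cube (q k)) x)"
    for x
  proof -
    obtain k0 where k0: "q k0 = cube_index x"
      using \<open>surj q\<close> by (metis surjD)
    have "(\<Sum>k. ennreal (f (q k)) * indicator (cube (q k)) x)
        = (\<Sum>k\<in>{k0}. ennreal (f (q k)) * indicator (cube (q k)) x)"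
      using \<open>inj q\<close> k0 by (intro suminf_finite) (auto simp: indicator_def mem_cube_iff, metis injD)
    then show ?thesis
      using k0 by (simp add: mem_cube_index)
  qed
  have "(\<integral>\<^sup>+ x. ennreal (f (cube_index x)) \<partial>lborel)
      = (\<Sum>k. \<integral>\<^sup>+ x. ennreal (f (q k)) * indicator (cube (q k)) x \<partial>lborel)"
    unfolding step_function by (rule nn_integral_suminf) measurable
  also have "\<dots> = (\<Sum>k. ennreal (f (q k)) * emeasure lborel (cube (q k)))"
    by (simp only: nn_integral_cmult_indicator[OF sets_lborel_cube])
  also have "\<dots> \<le> (\<Sum>k. ennreal (f (q k)))"
  proof (rule suminf_le)
    show "ennreal (f (q k)) * emeasure lborel (cube (q k)) \<le> ennreal (f (q k))" for k
      using mult_left_mono[OF emeasure_cube_le, of "ennreal (f (q k))" "q k"] by simp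
  qed auto
  also have "\<dots> \<le> ennreal B"
    unfolding suminf_eq_SUP
  proof (rule SUP_least)
    fix m
    have "(\<Sum>k<m. f (q k)) = (\<Sum>Q\<in>q ` {..<m}. f Q)"
      using \<open>inj q\<close> by (simp add: sum.reindex inj_on_subset)
    also have "\<dots> \<le> B"
      by (intro bounded) simp
    finally show "(\<Sum>k<m. ennreal (f (q k))) \<le> ennreal B"
      using nonneg by (simp add: sum_ennreal ennreal_leI)
  qed
  finally show ?thesis .
qed

definition meets :: "'n::finite tube \<Rightarrow> int^'n \<Rightarrow> bool" where
  "meets T Q \<longleftrightarrow> tube_set T \<inter> cube Q \<noteq> {}"

definition is_factorisation ::
    "nat \<Rightarrow> real \<Rightarrow> (nat \<Rightarrow> 'n::finite tube set) \<Rightarrow> (int^'n \<Rightarrow> real)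
      \<Rightarrow> (nat \<Rightarrow> int^'n \<Rightarrow> 'n tube \<Rightarrow> real) \<Rightarrow> bool" where
  "is_factorisation d C \<T> M S \<longleftrightarrow>
     (\<forall>j<d. \<forall>Q. \<forall>T\<in>\<T> j. S j Q T \<ge> 0) \<and>
     (\<forall>Q. \<forall>T\<in>Pi\<^sub>E {..<d} \<T>. (\<forall>j<d. meets (T j) Q) \<longrightarrow>
        wedge (\<lambda>j. tube_dir (T j)) d * M Q ^ CARD('n) \<le> C * (\<Prod>j<d. S j Q (T j))) \<and>
     (\<forall>j<d. \<forall>T\<in>\<T> j. \<forall>F. finite F \<and> F \<subseteq> {Q. meets T Q} \<longrightarrow> (\<Sum>Q\<in>F. S j Q T) \<le> C)"

definition cube_weight ::
    "nat \<Rightarrow> (nat \<Rightarrow> 'n::finite tube set) \<Rightarrow> (nat \<Rightarrow> 'n tube \<Rightarrow> real) \<Rightarrow> int^'n \<Rightarrow> real" where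
  "cube_weight d \<T> a Q = (\<Sum>T\<in>{T\<in>Pi\<^sub>E {..<d} \<T>. \<forall>j<d. meets (T j) Q}.
     (\<Prod>j<d. a j (T j)) * wedge (\<lambda>j. tube_dir (T j)) d)"

definition incident_mass ::
    "(nat \<Rightarrow> 'n::finite tube set) \<Rightarrow> (nat \<Rightarrow> 'n tube \<Rightarrow> real)
      \<Rightarrow> (nat \<Rightarrow> int^'n \<Rightarrow> 'n tube \<Rightarrow> real) \<Rightarrow> nat \<Rightarrow> int^'n \<Rightarrow> real" where
  "incident_mass \<T> a S j Q = (\<Sum>T\<in>{T\<in>\<T> j. meets T Q}. a j T * S j Q T)"

lemma cube_weight_nonneg:
  assumes "\<forall>j<d. \<forall>T\<in>\<T> j. 0 \<le> a j T"
  shows "0 \<le> cube_weight d \<T> a Q"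
  unfolding cube_weight_def using assms
  by (intro sum_nonneg mult_nonneg_nonneg prod_nonneg wedge_nonneg) (auto simp: PiE_iff)

lemma incident_mass_nonneg:
  assumes "is_factorisation d C \<T> M S" and "j < d" and "\<forall>T\<in>\<T> j. 0 \<le> a j T"
  shows "0 \<le> incident_mass \<T> a S j Q"
  using assms unfolding incident_mass_def is_factorisation_def by (auto intro!: sum_nonneg)

lemma cube_weight_le_prod_incident_mass:
  fixes \<T> :: "nat \<Rightarrow> 'n::finite tube set"
  assumes S: "is_factorisation d C \<T> M S"
    and fin: "\<forall>j<d. finite (\<T> j)" and a: "\<forall>j<d. \<forall>T\<in>\<T> j. 0 \<le> a j T"
  shows "M Q ^ CARD('n) * cube_weight d \<T> a Q \<le> C * (\<Prod>j<d. incident_mass \<T> a S j Q)"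
proof -
  define \<T>\<^sub>Q where "\<T>\<^sub>Q = Pi\<^sub>E {..<d} (\<lambda>j. {T\<in>\<T> j. meets T Q})"
  have tuples: "{T\<in>Pi\<^sub>E {..<d} \<T>. \<forall>j<d. meets (T j) Q} = \<T>\<^sub>Q"
    unfolding \<T>\<^sub>Q_def set_eq_iff PiE_iff by auto
  have "M Q ^ CARD('n) * cube_weight d \<T> a Q
      = (\<Sum>T\<in>\<T>\<^sub>Q. (\<Prod>j<d. a j (T j)) * (wedge (\<lambda>j. tube_dir (T j)) d * M Q ^ CARD('n)))"
    unfolding cube_weight_def tuples by (simp add: sum_distrib_left mult_ac)
  also have "\<dots> \<le> (\<Sum>T\<in>\<T>\<^sub>Q. (\<Prod>j<d. a j (T j)) * (C * (\<Prod>j<d. S j Q (T j))))"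
    using S a unfolding is_factorisation_def \<T>\<^sub>Q_def
    by (intro sum_mono mult_left_mono prod_nonneg) (auto simp: PiE_iff)
  also have "\<dots> = C * (\<Sum>T\<in>\<T>\<^sub>Q. \<Prod>j<d. a j (T j) * S j Q (T j))"
    by (simp add: sum_distrib_left prod.distrib mult_ac)
  also have "\<dots> = C * (\<Prod>j<d. incident_mass \<T> a S j Q)"
    unfolding \<T>\<^sub>Q_def incident_mass_def using fin by (subst prod_sum_PiE) auto
  finally show ?thesis .
qed

lemma sum_incident_mass_le:
  assumes S: "is_factorisation d C \<T> M S" and "j < d"
    and fin: "finite (\<T> j)" and a: "\<forall>T\<in>\<T> j. 0 \<le> a j T" and "finite F"
  shows "(\<Sum>Q\<in>F. incident_mass \<T> a S j Q) \<le> C * (\<Sum>T\<in>\<T> j. a j T)"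
proof -
  have "(\<Sum>Q\<in>F. incident_mass \<T> a S j Q) = (\<Sum>T\<in>\<T> j. a j T * (\<Sum>Q\<in>{Q\<in>F. meets T Q}. S j Q T))"
    unfolding incident_mass_def using fin \<open>finite F\<close>
    by (simp add: sum.inter_filter sum_distrib_left if_distrib sum.swap[of _ F] cong: if_cong)
  also have "\<dots> \<le> (\<Sum>T\<in>\<T> j. a j T * C)"
  proof (intro sum_mono mult_left_mono)
    fix T assume "T \<in> \<T> j"
    then show "(\<Sum>Q\<in>{Q\<in>F. meets T Q}. S j Q T) \<le> C"
      using S \<open>j < d\<close> \<open>finite F\<close> unfolding is_factorisation_def by (simp add: subset_eq)
  qed (use a in auto)
  finally show ?thesis
    by (simp add: sum_distrib_left mult_ac)
qed

lemma cube_weight_powr_le_prod_incident_mass: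
  fixes \<T> :: "nat \<Rightarrow> 'n::finite tube set"
  assumes d: "2 \<le> d" and "0 < C" and S: "is_factorisation d C \<T> M S"
    and fin: "\<forall>j<d. finite (\<T> j)" and a: "\<forall>j<d. \<forall>T\<in>\<T> j. 0 \<le> a j T"
    and "0 < s" and M: "M Q ^ CARD('n) = cube_weight d \<T> a Q powr (1 / (real d - 1)) / s"
  shows "cube_weight d \<T> a Q powr (1 / (real d - 1))
    \<le> (C * s) powr (1 / real d) * (\<Prod>j<d. incident_mass \<T> a S j Q powr (1 / real d))"
proof -
  define p where "p = 1 / (real d - 1)"
  define G where "G = cube_weight d \<T> a Q"
  define g where "g = incident_mass \<T> a S"
  have "real d * p = p + 1"
    using d by (simp add: p_def field_simps)
  then have "G powr (real d * p) = G powr p * G"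
    using cube_weight_nonneg[OF a] by (simp add: G_def powr_add)
  also have "\<dots> = s * (M Q ^ CARD('n) * G)"
    using M \<open>0 < s\<close> by (simp add: G_def p_def)
  also have "\<dots> \<le> s * (C * (\<Prod>j<d. g j Q))"
    unfolding G_def g_def using cube_weight_le_prod_incident_mass[OF S fin a] \<open>0 < s\<close> by simp
  finally have "G powr (real d * p) \<le> (C * s) * (\<Prod>j<d. g j Q)"
    by (simp add: mult_ac)
  moreover have "G powr p = (G powr (real d * p)) powr (1 / real d)"
    using d by (simp add: powr_powr)
  ultimately have "G powr p \<le> ((C * s) * (\<Prod>j<d. g j Q)) powr (1 / real d)"
    by (auto intro: powr_mono2)
  also have "\<dots> = (C * s) powr (1 / real d) * (\<Prod>j<d. g j Q powr (1 / real d))"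
    using \<open>0 < C\<close> \<open>0 < s\<close> S a unfolding g_def
    by (simp add: powr_mult prod_nonneg prod_powr_distrib incident_mass_nonneg)
  finally show ?thesis
    unfolding G_def g_def p_def .
qed

lemma sum_cube_weight_powr_le:
  fixes \<T> :: "nat \<Rightarrow> 'n::finite tube set"
  assumes d: "2 \<le> d" and "0 < C"
    and fin: "\<forall>j<d. finite (\<T> j)" and a: "\<forall>j<d. \<forall>T\<in>\<T> j. 0 \<le> a j T"
    and factorisable: "\<And>M. finite {Q. M Q \<noteq> 0} \<Longrightarrow> \<forall>Q. 0 \<le> M Q \<Longrightarrow>
      (\<Sum>Q\<in>{Q. M Q \<noteq> 0}. M Q ^ CARD('n)) = 1 \<Longrightarrow> \<exists>S. is_factorisation d C \<T> M S"
    and "finite F"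
  shows "(\<Sum>Q\<in>F. cube_weight d \<T> a Q powr (1 / (real d - 1)))
    \<le> C powr ((real d + 1) / (real d - 1)) * (\<Prod>j<d. \<Sum>T\<in>\<T> j. a j T) powr (1 / (real d - 1))"
proof -
  define p where "p = 1 / (real d - 1)"
  define G where "G = cube_weight d \<T> a"
  define P where "P = (\<Prod>j<d. \<Sum>T\<in>\<T> j. a j T)"
  define s where "s = (\<Sum>Q\<in>F. G Q powr p)"
  have G_nonneg: "0 \<le> G Q" for Q
    unfolding G_def using a by (rule cube_weight_nonneg)
  have P_nonneg: "0 \<le> P"
    unfolding P_def using a by (intro prod_nonneg sum_nonneg) auto
  have rhs: "C powr ((real d + 1) / (real d - 1)) * P powr p = (C ^ (d + 1) * P) powr p"
    using powr_power_mult[OF \<open>0 < C\<close> P_nonneg, of "d + 1" p] by (simp add: p_def add.commute)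
  consider "s = 0" | "0 < s"
    unfolding s_def by (metis le_less powr_ge_zero sum_nonneg)
  then have "s \<le> (C ^ (d + 1) * P) powr p"
  proof cases
    case 1
    then show ?thesis by simp
  next
    case 2
    obtain M where M_normalised: "finite {Q. M Q \<noteq> 0}" "\<forall>Q. 0 \<le> M Q"
        "(\<Sum>Q\<in>{Q. M Q \<noteq> 0}. M Q ^ CARD('n)) = 1"
      and M_power: "\<forall>Q\<in>F. M Q ^ CARD('n) = G Q powr p / s"
      using exists_normalised_root[of F "\<lambda>Q. G Q powr p" "CARD('n)"] \<open>finite F\<close> 2
      unfolding s_def by auto
    obtain S where S: "is_factorisation d C \<T> M S"
      using factorisable[OF M_normalised] by blast
    define g where "g = incident_mass \<T> a S"
    have g_nonneg: "\<forall>j<d. \<forall>Q\<in>F. 0 \<le> g j Q"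
      unfolding g_def using S a by (auto intro: incident_mass_nonneg)
    have "G Q powr p \<le> (C * s) powr (1 / real d) * (\<Prod>j<d. g j Q powr (1 / real d))"
      if "Q \<in> F" for Q
      using cube_weight_powr_le_prod_incident_mass[OF d \<open>0 < C\<close> S fin a 2] M_power that
      unfolding G_def g_def p_def by simp
    then have "s \<le> (C * s) powr (1 / real d) * (\<Sum>Q\<in>F. \<Prod>j<d. g j Q powr (1 / real d))"
      unfolding s_def by (simp add: sum_distrib_left sum_mono)
    also have "\<dots> \<le> (C * s) powr (1 / real d) * (\<Prod>j<d. (C * (\<Sum>T\<in>\<T> j. a j T)) powr (1 / real d))"
      using holder_sum_prod_powr[OF \<open>finite F\<close> _ g_nonneg] sum_incident_mass_le[OF S _ _ _ \<open>finite F\<close>]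
        fin a d unfolding g_def by (intro mult_left_mono) auto
    also have "(\<Prod>j<d. (C * (\<Sum>T\<in>\<T> j. a j T)) powr (1 / real d)) = (C ^ d * P) powr (1 / real d)"
      by (simp add: prod_powr_distrib[symmetric] prod.distrib P_def)
    also have "(C * s) powr (1 / real d) * (C ^ d * P) powr (1 / real d)
        = (C ^ (d + 1) * P * s) powr (1 / real d)"
      using \<open>0 < C\<close> 2 P_nonneg by (simp add: powr_mult[symmetric] mult_ac)
    finally show ?thesis
      unfolding p_def using 2 d \<open>0 < C\<close> P_nonneg
      by (intro le_powr_of_le_powr_self) (auto simp: mult_ac)
  qed
  then show ?thesis
    unfolding rhs[unfolded P_def p_def] s_def G_def P_def p_def .
qed

definition tube_sum ::
    "nat \<Rightarrow> (nat \<Rightarrow> 'n::finite tube set) \<Rightarrow> (nat \<Rightarrow> 'n tube \<Rightarrow> real) \<Rightarrow> real^'n \<Rightarrow> real" where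
  "tube_sum d \<T> a x = (\<Sum>T\<in>Pi\<^sub>E {..<d} \<T>.
     (\<Prod>j<d. a j (T j) * indicator (tube_set (T j)) x) * wedge (\<lambda>j. tube_dir (T j)) d)"

lemma
  assumes fin: "\<forall>j<d. finite (\<T> j)" and a: "\<forall>j<d. \<forall>T\<in>\<T> j. 0 \<le> a j T"
  shows tube_sum_nonneg: "0 \<le> tube_sum d \<T> a x"
    and tube_sum_le_cube_weight: "tube_sum d \<T> a x \<le> cube_weight d \<T> a (cube_index x)"
proof -
  have term_bound: "(\<Prod>j<d. a j (T j) * indicator (tube_set (T j)) x) * wedge (\<lambda>j. tube_dir (T j)) d
      \<le> (if \<forall>j<d. meets (T j) (cube_index x)
         then (\<Prod>j<d. a j (T j)) * wedge (\<lambda>j. tube_dir (T j)) d else 0)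
    \<and> 0 \<le> (\<Prod>j<d. a j (T j) * indicator (tube_set (T j)) x) * wedge (\<lambda>j. tube_dir (T j)) d"
    if T: "T \<in> Pi\<^sub>E {..<d} \<T>" for T
  proof (cases "\<forall>j<d. x \<in> tube_set (T j)")
    case True
    then have "\<forall>j<d. meets (T j) (cube_index x)"
      using mem_cube_index by (auto simp: meets_def)
    with True T a show ?thesis
      by (auto intro!: mult_nonneg_nonneg prod_nonneg wedge_nonneg simp: PiE_iff)
  next
    case False
    then obtain j where "j < d" "x \<notin> tube_set (T j)"
      by blast
    then have zero: "(\<Prod>j<d. a j (T j) * indicator (tube_set (T j)) x) = 0"
      by (intro prod_zero) (auto intro!: bexI[of _ j])
    show ?thesis
      unfolding zero using T a
      by (auto intro!: mult_nonneg_nonneg prod_nonneg wedge_nonneg simp: PiE_iff)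
  qed
  show "0 \<le> tube_sum d \<T> a x"
    unfolding tube_sum_def using term_bound by (auto intro: sum_nonneg)
  have "finite (Pi\<^sub>E {..<d} \<T>)"
    using fin by (intro finite_PiE) auto
  have "tube_sum d \<T> a x \<le> (\<Sum>T\<in>Pi\<^sub>E {..<d} \<T>. if \<forall>j<d. meets (T j) (cube_index x)
      then (\<Prod>j<d. a j (T j)) * wedge (\<lambda>j. tube_dir (T j)) d else 0)"
    unfolding tube_sum_def using term_bound by (intro sum_mono) auto
  also have "\<dots> = cube_weight d \<T> a (cube_index x)"
    unfolding cube_weight_def using \<open>finite (Pi\<^sub>E {..<d} \<T>)\<close> by (simp add: sum.inter_filter)
  finally show "tube_sum d \<T> a x \<le> cube_weight d \<T> a (cube_index x)" .
qed

lemma nn_integral_tube_sum_powr_le: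
  fixes \<T> :: "nat \<Rightarrow> 'n::finite tube set"
  assumes d: "2 \<le> d" and "0 < C"
    and fin: "\<forall>j<d. finite (\<T> j)" and a: "\<forall>j<d. \<forall>T\<in>\<T> j. 0 \<le> a j T"
    and factorisable: "\<And>M. finite {Q. M Q \<noteq> 0} \<Longrightarrow> \<forall>Q. 0 \<le> M Q \<Longrightarrow>
      (\<Sum>Q\<in>{Q. M Q \<noteq> 0}. M Q ^ CARD('n)) = 1 \<Longrightarrow> \<exists>S. is_factorisation d C \<T> M S"
  shows "(\<integral>\<^sup>+ x. ennreal (tube_sum d \<T> a x powr (1 / (real d - 1))) \<partial>lborel)
    \<le> ennreal (C powr ((real d + 1) / (real d - 1)) * (\<Prod>j<d. \<Sum>T\<in>\<T> j. a j T) powr (1 / (real d - 1)))"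
proof -
  have pointwise: "tube_sum d \<T> a x powr (1 / (real d - 1))
      \<le> cube_weight d \<T> a (cube_index x) powr (1 / (real d - 1))" for x
    using tube_sum_nonneg[OF fin a] tube_sum_le_cube_weight[OF fin a] d
    by (intro powr_mono2) auto
  have "(\<integral>\<^sup>+ x. ennreal (tube_sum d \<T> a x powr (1 / (real d - 1))) \<partial>lborel)
      \<le> (\<integral>\<^sup>+ x. ennreal (cube_weight d \<T> a (cube_index x) powr (1 / (real d - 1))) \<partial>lborel)"
    by (intro nn_integral_mono ennreal_leI pointwise)
  also have "\<dots> \<le> ennreal (C powr ((real d + 1) / (real d - 1))
      * (\<Prod>j<d. \<Sum>T\<in>\<T> j. a j T) powr (1 / (real d - 1)))"
    by (rule nn_integral_cube_index_le[OF powr_ge_zero])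
      (rule sum_cube_weight_powr_le[OF d \<open>0 < C\<close> fin a factorisable])
  finally show ?thesis .
qed

theorem proposition2p1:
  fixes d :: nat and C :: real
    and n_type :: "('n::finite) itself"
  assumes "2 \<le> d" and "d \<le> CARD('n)" and "C > 0"
    and hyp: "\<forall>(\<T> :: nat \<Rightarrow> 'n tube set) (M :: int^'n \<Rightarrow> real).
       (\<forall>j<d. finite (\<T> j) \<and> (\<forall>T\<in>\<T> j. is_tube T)) \<and>
       finite {Q. M Q \<noteq> 0} \<and> (\<forall>Q. M Q \<ge> 0) \<and>
       (\<Sum>Q\<in>{Q. M Q \<noteq> 0}. M Q ^ CARD('n)) = 1
       \<longrightarrow> (\<exists>S :: nat \<Rightarrow> int^'n \<Rightarrow> 'n tube \<Rightarrow> real.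
              (\<forall>j<d. \<forall>Q. \<forall>T\<in>\<T> j. S j Q T \<ge> 0) \<and>
              (\<forall>Q. \<forall>T\<in>Pi\<^sub>E {..<d} \<T>.
                  (\<forall>j<d. tube_set (T j) \<inter> cube Q \<noteq> {}) \<longrightarrow>
                  wedge (\<lambda>j. tube_dir (T j)) d * M Q ^ CARD('n)
                    \<le> C * (\<Prod>j<d. S j Q (T j))) \<and>
              (\<forall>j<d. \<forall>T\<in>\<T> j. \<forall>F. finite F \<and> F \<subseteq> {Q. tube_set T \<inter> cube Q \<noteq> {}}
                  \<longrightarrow> (\<Sum>Q\<in>F. S j Q T) \<le> C))"
  shows "\<exists>Cdn :: real. \<forall>(\<T> :: nat \<Rightarrow> 'n tube set) (a :: nat \<Rightarrow> 'n tube \<Rightarrow> real).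
       (\<forall>j<d. finite (\<T> j) \<and> (\<forall>T\<in>\<T> j. is_tube T \<and> a j T \<ge> 0))
       \<longrightarrow> (\<integral>\<^sup>+ x. ennreal ((\<Sum>T\<in>Pi\<^sub>E {..<d} \<T>.
                 (\<Prod>j<d. a j (T j) * indicator (tube_set (T j)) x)
                 * wedge (\<lambda>j. tube_dir (T j)) d) powr (1 / (real d - 1))) \<partial>lborel)
           \<le> ennreal (Cdn * (\<Prod>j<d. \<Sum>T\<in>\<T> j. a j T) powr (1 / (real d - 1)))"
proof -
  have "(\<integral>\<^sup>+ x. ennreal (tube_sum d \<T> a x powr (1 / (real d - 1))) \<partial>lborel)
      \<le> ennreal (C powr ((real d + 1) / (real d - 1)) * (\<Prod>j<d. \<Sum>T\<in>\<T> j. a j T) powr (1 / (real d - 1)))"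
    if H: "\<forall>j<d. finite (\<T> j) \<and> (\<forall>T\<in>\<T> j. is_tube T \<and> a j T \<ge> 0)"
    for \<T> :: "nat \<Rightarrow> 'n tube set" and a
  proof (rule nn_integral_tube_sum_powr_le[OF \<open>2 \<le> d\<close> \<open>C > 0\<close>])
    show "\<forall>j<d. finite (\<T> j)" and "\<forall>j<d. \<forall>T\<in>\<T> j. 0 \<le> a j T"
      using H by blast+
    fix M :: "int^'n \<Rightarrow> real"
    assume "finite {Q. M Q \<noteq> 0}" "\<forall>Q. 0 \<le> M Q" "(\<Sum>Q\<in>{Q. M Q \<noteq> 0}. M Q ^ CARD('n)) = 1"
    with H have "(\<forall>j<d. finite (\<T> j) \<and> (\<forall>T\<in>\<T> j. is_tube T)) \<and> finite {Q. M Q \<noteq> 0}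
        \<and> (\<forall>Q. M Q \<ge> 0) \<and> (\<Sum>Q\<in>{Q. M Q \<noteq> 0}. M Q ^ CARD('n)) = 1"
      by blast
    from hyp[rule_format, OF this] show "\<exists>S. is_factorisation d C \<T> M S"
      unfolding is_factorisation_def meets_def .
  qed
  then show ?thesis
    unfolding tube_sum_def by blast
qed

end
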